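(* Let $k\ge2$, $d\ge2$ even, $\beta>0$, and let $\pi,\hat\pi$ be probability measures on $(0,1)$ with $\pi=\mathcal F_{k,d,\beta}(\hat\pi)$ and $\hat\pi=\hat{\mathcal F}_{k,d,\beta}(\pi)$. Let $h[\pi]=\int\eta\,d\pi(\eta)$ and $\hat h[\hat\pi]=\int\hat\eta\,d\hat\pi(\hat\eta)$. Then $$h[\pi]=1-\hat h[\hat\pi],\qquad \hat h[\hat\pi]=\frac{1-c_\beta h[\pi]^{k-1}}{2-c_\beta h[\pi]^{k-1}}.$$
   Context: $c_\beta=1-e^{-\beta}$. For a probability measure $\pi$ on $(0,1)$ and $\eta\in(0,1)^{k-1}$ let $\hat z(\eta)=2-c_\beta\prod_{j=1}^{k-1}\eta_j$; draw $\eta$ with density $\hat z(\eta)/\int\hat z\,d\pi^{\otimes(k-1)}$ w.r.t. $\pi^{\otimes(k-1)}$; $\hat{\mathcal F}_{k,d,\beta}(\pi)$ is the law of $(1-c_\beta\prod_j\eta_j)/\hat z(\eta)$. For a probability measure $\hat\pi$ on $(0,1)$ and $\hat\eta\in(0,1)^{d-1}$ let $z(\hat\eta)=\prod_{j=1}^{d/2-1}\hat\eta_j\prod_{j=d/2}^{d-1}(1-\hat\eta_j)+\prod_{j=1}^{d/2-1}(1-\hat\eta_j)\prod_{j=d/2}^{d-1}\hat\eta_j$; draw $\hat\eta$ with density $z(\hat\eta)/\int z\,d\hat\pi^{\otimes(d-1)}$ w.r.t. $\hat\pi^{\otimes(d-1)}$; $\mathcal F_{k,d,\beta}(\hat\pi)$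 is the law of $\prod_{j=1}^{d/2-1}\hat\eta_j\prod_{j=d/2}^{d-1}(1-\hat\eta_j)/z(\hat\eta)$. *)

theory Defs
  imports "HOL-Probability.Probability"
begin

definition c_beta :: "real \<Rightarrow> real" where
  "c_beta \<beta> = 1 - exp (- \<beta>)"

(* Paper index j = 1..k-1 is rendered as j \<in> {..<k-1} (shift by one). *)
definition zhat :: "nat \<Rightarrow> real \<Rightarrow> (nat \<Rightarrow> real) \<Rightarrow> real" where
  "zhat k \<beta> \<eta> = 2 - c_beta \<beta> * (\<Prod>j<k-1. \<eta> j)"

definition Fhat :: "nat \<Rightarrow> nat \<Rightarrow> real \<Rightarrow> real measure \<Rightarrow> real measure" where
  "Fhat k d \<beta> \<pi> =
     (let M = PiM {..<k-1} (\<lambda>_. \<pi>);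
          Z = (\<integral>\<eta>. zhat k \<beta> \<eta> \<partial>M)
      in distr (density M (\<lambda>\<eta>. ennreal (zhat k \<beta> \<eta> / Z))) borel
           (\<lambda>\<eta>. (1 - c_beta \<beta> * (\<Prod>j<k-1. \<eta> j)) / zhat k \<beta> \<eta>))"

(* Paper indices j = 1..d/2-1 become {..<d div 2 - 1}; j = d/2..d-1 become {d div 2 - 1..<d-1}. *)
definition zF_num :: "nat \<Rightarrow> (nat \<Rightarrow> real) \<Rightarrow> real" where
  "zF_num d \<eta> = (\<Prod>j<d div 2 - 1. \<eta> j) * (\<Prod>j\<in>{d div 2 - 1..<d-1}. 1 - \<eta> j)"

definition zF :: "nat \<Rightarrow> (nat \<Rightarrow> real) \<Rightarrow> real" where
  "zF d \<eta> = zF_num d \<eta> + (\<Prod>j<d div 2 - 1. 1 - \<eta> j) * (\<Prod>j\<in>{d div 2 - 1..<d-1}. \<eta> j)"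

definition F :: "nat \<Rightarrow> nat \<Rightarrow> real \<Rightarrow> real measure \<Rightarrow> real measure" where
  "F k d \<beta> \<pi>h =
     (let M = PiM {..<d-1} (\<lambda>_. \<pi>h);
          Z = (\<integral>\<eta>. zF d \<eta> \<partial>M)
      in distr (density M (\<lambda>\<eta>. ennreal (zF d \<eta> / Z))) borel
           (\<lambda>\<eta>. zF_num d \<eta> / zF d \<eta>))"

(* probability measure on (0,1), represented as a Borel probability measure on the reals
   concentrated on the open interval (0,1) *)
definition prob_on_01 :: "real measure \<Rightarrow> bool" where
  "prob_on_01 \<pi> \<longleftrightarrow> prob_space \<pi> \<and> sets \<pi> = sets borel \<and> emeasure \<pi> {0<..<1} = 1"

end

theory Submission imports Defs begin

text \<open>Both maps reweight a product measure by a normaliser z and push it forward along n/z,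
so the mean of the image is \<open>\<integral>n / \<integral>z\<close>. Under a product of copies of a measure with mean h,
n and z are sums of products of independent factors \<open>\<eta> j\<close> and \<open>1 - \<eta> j\<close>, whose integrals
are monomials in h and 1 - h. For \<open>F\<close>, with m = d/2 - 1 and h the mean of the input, this gives
\<open>h^m (1-h)^(m+1) / (h^m (1-h)^m) = 1 - h\<close>; for \<open>Fhat\<close> it gives
\<open>(1 - c h^(k-1)) / (2 - c h^(k-1))\<close> directly.\<close>

lemma integral_distr_density_ratio:
  fixes n z :: "'a \<Rightarrow> real"
  assumes [measurable]: "n \<in> borel_measurable M" "z \<in> borel_measurable M"
    and pos: "AE x in M. 0 < z x"
  shows "(\<integral>y. y \<partial>distr (density M (\<lambda>x. ennreal (z x / (\<integral>x. z x \<partial>M)))) borel (\<lambda>x. n x / z x))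
       = (\<integral>x. n x \<partial>M) / (\<integral>x. z x \<partial>M)"
proof -
  define Z where "Z = (\<integral>x. z x \<partial>M)"
  have "0 \<le> Z"
    unfolding Z_def using pos by (intro integral_nonneg_AE) (auto elim: eventually_mono)
  have "(\<integral>y. y \<partial>distr (density M (\<lambda>x. ennreal (z x / Z))) borel (\<lambda>x. n x / z x))
      = (\<integral>x. n x / z x \<partial>density M (\<lambda>x. ennreal (z x / Z)))"
    by (intro integral_distr) simp_all
  also have "\<dots> = (\<integral>x. z x / Z * (n x / z x) \<partial>M)"
    using pos \<open>0 \<le> Z\<close> by (subst integral_density) (auto elim: eventually_mono)
  also have "\<dots> = (\<integral>x. n x / Z \<partial>M)"
    using pos by (intro integral_cong_AE) (auto elim: eventually_mono)
  finally show ?thesis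
    by (simp add: Z_def)
qed

lemma prob_on_01_AE:
  assumes "prob_on_01 \<mu>"
  shows "AE x in \<mu>. 0 < x \<and> x < 1"
proof -
  interpret prob_space \<mu>
    using assms by (simp add: prob_on_01_def)
  have "{0<..<1::real} \<in> sets \<mu>" "emeasure \<mu> {0<..<1} = 1"
    using assms by (simp_all add: prob_on_01_def)
  then have "AE x in \<mu>. x \<in> {0<..<1}"
    using AE_prob_1[of "{0<..<1}"] by (simp add: emeasure_eq_measure)
  then show ?thesis
    by simp
qed

lemma prob_on_01_integrable:
  assumes "prob_on_01 \<mu>"
  shows "integrable \<mu> (\<lambda>x. x)"
proof -
  interpret prob_space \<mu>
    using assms by (simp add: prob_on_01_def)
  have "sets \<mu> = sets borel"
    using assms by (simp add: prob_on_01_def)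
  then have "(\<lambda>x::real. x) \<in> borel_measurable \<mu>"
    using measurable_cong_sets[of \<mu> borel borel borel] by simp
  then show ?thesis
    using prob_on_01_AE[OF assms] by (intro integrable_const_bound[where B=1]) auto
qed

lemma prob_on_01_mean_bounds:
  assumes "prob_on_01 \<mu>"
  shows "0 < (\<integral>x. x \<partial>\<mu>)" "(\<integral>x. x \<partial>\<mu>) < 1"
proof -
  interpret prob_space \<mu>
    using assms by (simp add: prob_on_01_def)
  note int = prob_on_01_integrable[OF assms] integrable_const
  show "0 < (\<integral>x. x \<partial>\<mu>)"
    using integral_less_AE_space[OF int(2) int(1), of 0] prob_on_01_AE[OF assms]
    by (simp add: emeasure_space_1 eventually_conj_iff)
  show "(\<integral>x. x \<partial>\<mu>) < 1"
    using integral_less_AE_space[OF int(1) int(2), of 1] prob_on_01_AE[OF assms]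
    by (simp add: emeasure_space_1 eventually_conj_iff prob_space)
qed

lemma AE_PiM_prob_on_01:
  assumes "prob_on_01 \<mu>" "finite I"
  shows "AE \<eta> in PiM I (\<lambda>_. \<mu>). \<forall>j\<in>I. 0 < \<eta> j \<and> \<eta> j < 1"
proof (rule AE_ball_countable')
  fix j assume "j \<in> I"
  then show "AE \<eta> in PiM I (\<lambda>_. \<mu>). 0 < \<eta> j \<and> \<eta> j < 1"
    using assms(1) prob_on_01_AE[OF assms(1)]
    by (intro AE_PiM_component[where P="\<lambda>x. 0 < x \<and> x < 1"]) (simp_all add: prob_on_01_def)
qed (simp add: countable_finite assms(2))

lemma has_bochner_integral_PiM_prod_prod_one_minus:
  fixes \<mu> :: "real measure"
  assumes "prob_space \<mu>" "integrable \<mu> (\<lambda>x. x)" "finite I" "finite J" "I \<inter> J = {}"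
  defines "h \<equiv> (\<integral>x. x \<partial>\<mu>)"
  shows "has_bochner_integral (PiM (I \<union> J) (\<lambda>_. \<mu>))
           (\<lambda>\<eta>. (\<Prod>j\<in>I. \<eta> j) * (\<Prod>j\<in>J. 1 - \<eta> j)) (h ^ card I * (1 - h) ^ card J)"
proof -
  interpret product_prob_space "\<lambda>_. \<mu>"
    using assms(1) by (simp add: product_prob_space_def product_prob_space_axioms_def
        product_sigma_finite_def prob_space_imp_sigma_finite)
  define f where "f j = (\<lambda>x::real. if j \<in> I then x else 1 - x)" for j
  have int_f: "integrable \<mu> (f j)" for j
    using assms(2) by (cases "j \<in> I") (simp_all add: f_def)
  have split: "(\<Prod>j\<in>I \<union> J. g j) = (\<Prod>j\<in>I. g j) * (\<Prod>j\<in>J. g j)" for g :: "_ \<Rightarrow> real"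
    using assms(3-5) by (rule prod.union_disjoint)
  have eq: "(\<lambda>\<eta>. (\<Prod>j\<in>I. \<eta> j) * (\<Prod>j\<in>J. 1 - \<eta> j)) = (\<lambda>\<eta>. \<Prod>j\<in>I \<union> J. f j (\<eta> j))"
    unfolding split using assms(5) by (intro ext arg_cong2[where f="(*)"] prod.cong) (auto simp: f_def)
  have "integrable (PiM (I \<union> J) (\<lambda>_. \<mu>)) (\<lambda>\<eta>. \<Prod>j\<in>I \<union> J. f j (\<eta> j))"
    using assms(3,4) int_f by (intro product_integrable_prod) auto
  moreover have "(\<integral>\<eta>. (\<Prod>j\<in>I \<union> J. f j (\<eta> j)) \<partial>PiM (I \<union> J) (\<lambda>_. \<mu>))
      = (\<Prod>j\<in>I. integral\<^sup>L \<mu> (f j)) * (\<Prod>j\<in>J. integral\<^sup>L \<mu> (f j))"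
    using assms(3,4) int_f by (subst product_integral_prod) (simp_all add: split)
  moreover have "f j = (\<lambda>x. 1 - x)" if "j \<in> J" for j
    using that assms(5) by (auto simp: f_def fun_eq_iff)
  then have "(\<Prod>j\<in>J. integral\<^sup>L \<mu> (f j)) = (1 - h) ^ card J"
    using assms(2) by (simp add: h_def prob_space.prob_space[OF assms(1)] cong: prod.cong)
  moreover have "(\<Prod>j\<in>I. integral\<^sup>L \<mu> (f j)) = h ^ card I"
    by (simp add: f_def h_def)
  ultimately show ?thesis
    by (simp add: has_bochner_integral_iff eq)
qed

lemma c_beta_bounds:
  assumes "\<beta> > 0"
  shows "0 < c_beta \<beta>" "c_beta \<beta> < 1"
  using assms by (simp_all add: c_beta_def)

lemma integral_Fhat:
  assumes \<pi>: "prob_on_01 \<pi>" and "\<beta> > 0"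
  defines "h \<equiv> (\<integral>x. x \<partial>\<pi>)" and "c \<equiv> c_beta \<beta>"
  shows "(\<integral>x. x \<partial>Fhat k d \<beta> \<pi>) = (1 - c * h ^ (k-1)) / (2 - c * h ^ (k-1))"
proof -
  define M where "M = PiM {..<k-1} (\<lambda>_. \<pi>)"
  interpret M: prob_space M
    unfolding M_def using \<pi> by (simp add: prob_on_01_def prob_space_PiM)
  have [measurable_cong]: "sets \<pi> = sets borel"
    using \<pi> by (simp add: prob_on_01_def)
  have c: "0 < c" "c < 1"
    using c_beta_bounds[OF \<open>\<beta> > 0\<close>] by (simp_all add: c_def)
  have "has_bochner_integral M (\<lambda>\<eta>. \<Prod>j<k-1. \<eta> j) (h ^ (k-1))"
    using has_bochner_integral_PiM_prod_prod_one_minus[of \<pi> "{..<k-1}" "{}"] \<pi>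
    by (simp add: M_def h_def prob_on_01_integrable prob_on_01_def)
  moreover have "has_bochner_integral M (\<lambda>_. a) a" for a :: real
    by (simp add: has_bochner_integral_iff M.prob_space)
  ultimately have num: "has_bochner_integral M (\<lambda>\<eta>. 1 - c * (\<Prod>j<k-1. \<eta> j)) (1 - c * h ^ (k-1))"
    and den: "has_bochner_integral M (zhat k \<beta>) (2 - c * h ^ (k-1))"
    unfolding zhat_def c_def[symmetric]
    by (auto intro!: has_bochner_integral_diff has_bochner_integral_mult_right)
  have "AE \<eta> in M. 0 < zhat k \<beta> \<eta>"
    using AE_PiM_prob_on_01[OF \<pi> finite_lessThan] unfolding M_def
  proof (eventually_elim)
    case (elim \<eta>)
    then have "0 \<le> (\<Prod>j<k-1. \<eta> j)" "(\<Prod>j<k-1. \<eta> j) \<le> 1"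
      by (auto intro: prod_nonneg prod_le_1 less_imp_le)
    then have "c * (\<Prod>j<k-1. \<eta> j) \<le> 1"
      using c by (intro mult_le_one) auto
    then show ?case
      by (simp add: zhat_def c_def[symmetric])
  qed
  moreover have "(\<lambda>\<eta>. 1 - c * (\<Prod>j<k-1. \<eta> j)) \<in> borel_measurable M"
    "zhat k \<beta> \<in> borel_measurable M"
    unfolding M_def zhat_def by measurable
  ultimately have "(\<integral>x. x \<partial>Fhat k d \<beta> \<pi>)
      = (\<integral>\<eta>. 1 - c * (\<Prod>j<k-1. \<eta> j) \<partial>M) / (\<integral>\<eta>. zhat k \<beta> \<eta> \<partial>M)"
    unfolding Fhat_def Let_def M_def[symmetric] c_def by (intro integral_distr_density_ratio)
  then show ?thesis
    using num den by (simp add: has_bochner_integral_integral_eq)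
qed

lemma integral_F:
  assumes \<pi>: "prob_on_01 \<pi>" and "d \<ge> 2" "even d"
  defines "h \<equiv> (\<integral>x. x \<partial>\<pi>)"
  shows "(\<integral>x. x \<partial>F k d \<beta> \<pi>) = 1 - h"
proof -
  define m where "m = d div 2 - 1"
  define M where "M = PiM {..<d-1} (\<lambda>_. \<pi>)"
  have [measurable_cong]: "sets \<pi> = sets borel" and "prob_space \<pi>"
    using \<pi> by (simp_all add: prob_on_01_def)
  have "d - 1 = m + (m + 1)"
    using \<open>d \<ge> 2\<close> \<open>even d\<close> by (auto simp: m_def elim!: evenE)
  then have union: "{..<m} \<union> {m..<d-1} = {..<d-1}" "{m..<d-1} \<union> {..<m} = {..<d-1}"
    and card: "card {m..<d-1} = m + 1"
    by auto
  have disjoint: "{..<m} \<inter> {m..<d-1} = {}" "{m..<d-1} \<inter> {..<m} = {}"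
    by auto
  note prod_integral = has_bochner_integral_PiM_prod_prod_one_minus[OF \<open>prob_space \<pi>\<close>
      prob_on_01_integrable[OF \<pi>], folded h_def]
  have num: "has_bochner_integral M (zF_num d) (h ^ m * (1 - h) ^ (m + 1))"
    using prod_integral[OF _ _ disjoint(1)]
    unfolding union card M_def zF_num_def[abs_def] m_def[symmetric] by auto
  have "has_bochner_integral M (\<lambda>\<eta>. (\<Prod>j<m. 1 - \<eta> j) * (\<Prod>j\<in>{m..<d-1}. \<eta> j))
      (h ^ (m + 1) * (1 - h) ^ m)"
    using prod_integral[OF _ _ disjoint(2)] unfolding union card M_def
    by (auto simp: mult.commute)
  then have den: "has_bochner_integral M (zF d) (h ^ m * (1 - h) ^ (m + 1) + h ^ (m + 1) * (1 - h) ^ m)"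
    using num unfolding zF_def m_def[symmetric] by (intro has_bochner_integral_add)
  have "AE \<eta> in M. 0 < zF d \<eta>"
    using AE_PiM_prob_on_01[OF \<pi> finite_lessThan] unfolding M_def
    by eventually_elim (auto simp: zF_def zF_num_def intro!: add_pos_pos mult_pos_pos prod_pos)
  moreover have "zF_num d \<in> borel_measurable M" "zF d \<in> borel_measurable M"
    unfolding M_def zF_num_def zF_def by measurable
  ultimately have "(\<integral>x. x \<partial>F k d \<beta> \<pi>) = (\<integral>\<eta>. zF_num d \<eta> \<partial>M) / (\<integral>\<eta>. zF d \<eta> \<partial>M)"
    unfolding F_def Let_def M_def[symmetric] by (intro integral_distr_density_ratio)
  also have "\<dots> = (h ^ m * (1 - h) ^ m * (1 - h)) / (h ^ m * (1 - h) ^ m * ((1 - h) + h))"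
    using num den by (simp add: has_bochner_integral_integral_eq algebra_simps)
  also have "\<dots> = 1 - h"
    using prob_on_01_mean_bounds[OF \<pi>] by (simp add: h_def)
  finally show ?thesis .
qed

theorem lemma4p2:
  fixes k d :: nat and \<beta> :: real and \<pi> \<pi>h :: "real measure"
  assumes "k \<ge> 2" and "d \<ge> 2" and "even d" and "\<beta> > 0"
    and "prob_on_01 \<pi>" and "prob_on_01 \<pi>h"
    and "\<pi> = F k d \<beta> \<pi>h" and "\<pi>h = Fhat k d \<beta> \<pi>"
  shows "(\<integral>x. x \<partial>\<pi>) = 1 - (\<integral>x. x \<partial>\<pi>h)
    \<and> (\<integral>x. x \<partial>\<pi>h) = (1 - c_beta \<beta> * (\<integral>x. x \<partial>\<pi>) ^ (k-1)) / (2 - c_beta \<beta> * (\<integral>x. x \<partial>\<pi>) ^ (k-1))"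
proof
  show "(\<integral>x. x \<partial>\<pi>) = 1 - (\<integral>x. x \<partial>\<pi>h)"
    using integral_F[OF \<open>prob_on_01 \<pi>h\<close> \<open>d \<ge> 2\<close> \<open>even d\<close>] \<open>\<pi> = F k d \<beta> \<pi>h\<close> by simp
  show "(\<integral>x. x \<partial>\<pi>h) = (1 - c_beta \<beta> * (\<integral>x. x \<partial>\<pi>) ^ (k-1)) / (2 - c_beta \<beta> * (\<integral>x. x \<partial>\<pi>) ^ (k-1))"
    using integral_Fhat[OF \<open>prob_on_01 \<pi>\<close> \<open>\<beta> > 0\<close>] \<open>\<pi>h = Fhat k d \<beta> \<pi>\<close> by simp
qed

end
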